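(* Let $\xi\in\Xi^*_{T1}$. Then there exist a distribution $\mu_1\in\Delta(\Pi_{T1})$ and a single plan $\pi_2\in\Pi_{T2}$ such that $\xi=f(\mu_1\otimes\delta_{\pi_2})$, where $\delta_{\pi_2}$ is the point mass at $\pi_2$; moreover $\xi[\varnothing,\sigma_{T2}]=1$ if $\pi_2\in\Pi_{T2}(\sigma_{T2})$ and $0$ otherwise. Symmetrically, for $\xi\in\Xi^*_{T2}$ there exist $\pi_1\in\Pi_{T1}$ and $\mu_2\in\Delta(\Pi_{T2})$ with $\xi=f(\delta_{\pi_1}\otimes\mu_2)$.
   Context: A finite extensive-form game is played on a tree; each internal node belongs to one of the players $T1,T2,O$ or to chance. The nodes of player $i$ are partitioned into information sets $\mathcal I_i$; all nodes of $I\in\mathcal I_i$ share the action set $A_I$. Perfect recall is assumed. The sequences of player $i$ are $\Sigma_i=\{(I,a):I\in\mathcal I_i,a\in A_I\}\cup\{\varnothing\}$. For an information set $I$ of player $i$, $\sigma(I)$ denotes the last pair $(I',a')$ of player $i$ on the root-to-$I$ path, or $\varnothing$ if $i$ does not act before $I$. Two information sets $I_i\in\mathcal I_i$, $I_j\in\mathcal I_j$ are connected ($I_i\rightleftharpoons I_j$) if there exist $v\in I_i$, $w\in I_j$ such that the root-to-$v$ path passes through $w$ or vice versa. A pair $(\sigma_i,\sigma_j)$ is relevant ($\sigma_i\bowtie\sigma_j$) if one of them is $\varnothing$ or $\sigma_i=(I_i,a_i)$, $\sigma_j=(I_j,a_j)$ with $I_i\rightleftharpoons I_j$; $\Sigma_{T1}\bowtie\Sigma_{T2}$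 is the set of relevant pairs. Similarly $\sigma_i\bowtie I_j$ if $\sigma_i=\varnothing$ or $\sigma_i=(I_i,a_i)$ with $I_i\rightleftharpoons I_j$. A reduced-normal-form plan of player $i$ chooses an action at every information set of $i$ that remains reachable given the plan's own choices; their set is $\Pi_i$. For $\sigma=(I,a)$, $\Pi_i(\sigma)$ is the set of plans prescribing all of $i$'s actions on the path to $I$ and playing $a$ at $I$; $\Pi_i(\varnothing)=\Pi_i$. For $\mu_1\in\Delta(\Pi_{T1}),\mu_2\in\Delta(\Pi_{T2})$, $\mu_1\otimes\mu_2$ is the product distribution $(\pi_1,\pi_2)\mapsto\mu_1(\pi_1)\mu_2(\pi_2)$. The map $f$ sends $\mu_T\in\Delta(\Pi_{T1}\times\Pi_{T2})$ to the vector $f(\mu_T)$ indexed by relevant pairs with $f(\mu_T)[\sigma_{T1},\sigma_{T2}]=\sum_{\pi_1\in\Pi_{T1}(\sigma_{T1}),\pi_2\in\Pi_{T2}(\sigma_{T2})}\mu_T(\pi_1,\pi_2)$. The von Stengel–Forges polytope $\mathcal V_T$ is the set of nonnegative vectors $\xi$ indexed by relevant pairs with: $\xi[\varnothing,\varnothing]=1$; $\sum_{a\in A_{I}}\xi[(I,a),\sigma_{T2}]=\xi[\sigma(I),\sigma_{T2}]$ for all $I\in\mathcal I_{T1}$, $\sigma_{T2}\in\Sigma_{T2}$ with $I\bowtie\sigma_{T2}$; $\sum_{b\in A_{J}}\xi[\sigma_{T1},(J,b)]=\xi[\sigma_{T1},\sigma(J)]$ for all $J\in\mathcal I_{T2}$,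 $\sigma_{T1}\in\Sigma_{T1}$ with $\sigma_{T1}\bowtie J$. The semi-randomized correlation plans are $\Xi^*_{T1}=\{\xi\in\mathcal V_T:\xi[\varnothing,\sigma_{T2}]\in\{0,1\}\ \forall\sigma_{T2}\in\Sigma_{T2}\}$ and $\Xi^*_{T2}=\{\xi\in\mathcal V_T:\xi[\sigma_{T1},\varnothing]\in\{0,1\}\ \forall\sigma_{T1}\in\Sigma_{T1}\}$. *)

theory Defs
  imports "HOL-Probability.Probability"
begin

datatype plr = T1 | T2 | O | Chance

text \<open>A game tree is a finite prefix-closed set H of histories (lists of actions);
  the root is []. pl h is the player to move at h, ifs h the label of the information
  set containing h.\<close>

definition internal :: "'a list set \<Rightarrow> 'a list \<Rightarrow> bool" where
  "internal H h \<longleftrightarrow> h \<in> H \<and> (\<exists>a. h @ [a] \<in> H)"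

definition acts :: "'a list set \<Rightarrow> 'a list \<Rightarrow> 'a set" where
  "acts H h = {a. h @ [a] \<in> H}"

definition nodes :: "'a list set \<Rightarrow> ('a list \<Rightarrow> 'i) \<Rightarrow> 'i \<Rightarrow> 'a list set" where
  "nodes H ifs I = {h. internal H h \<and> ifs h = I}"

definition Isets :: "'a list set \<Rightarrow> ('a list \<Rightarrow> plr) \<Rightarrow> ('a list \<Rightarrow> 'i) \<Rightarrow> plr \<Rightarrow> 'i set" where
  "Isets H pl ifs i = ifs ` {h. internal H h \<and> pl h = i}"

text \<open>Action set A_I (all nodes of I share it)\<close>
definition AI :: "'a list set \<Rightarrow> ('a list \<Rightarrow> 'i) \<Rightarrow> 'i \<Rightarrow> 'a set" where
  "AI H ifs I = acts H (SOME h. h \<in> nodes H ifs I)"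

definition seqs :: "('a list \<Rightarrow> plr) \<Rightarrow> ('a list \<Rightarrow> 'i) \<Rightarrow> plr \<Rightarrow> 'a list \<Rightarrow> ('i \<times> 'a) list" where
  "seqs pl ifs i h = map (\<lambda>k. (ifs (take k h), h ! k)) (filter (\<lambda>k. pl (take k h) = i) [0..<length h])"

definition wf_game :: "'a list set \<Rightarrow> ('a list \<Rightarrow> plr) \<Rightarrow> ('a list \<Rightarrow> 'i) \<Rightarrow> bool" where
  "wf_game H pl ifs \<longleftrightarrow>
     finite H \<and> [] \<in> H \<and> (\<forall>h a. h @ [a] \<in> H \<longrightarrow> h \<in> H) \<and>
     (\<forall>h h'. internal H h \<and> internal H h' \<and> ifs h = ifs h' \<longrightarrow>
        pl h = pl h' \<and> acts H h = acts H h') \<and>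
     \<comment> \<open>perfect recall for every (non-chance) player\<close>
     (\<forall>i h h'. i \<noteq> Chance \<and> internal H h \<and> internal H h' \<and> pl h = i \<and> ifs h = ifs h'
        \<longrightarrow> seqs pl ifs i h = seqs pl ifs i h')"

text \<open>A sequence is None (the empty sequence) or Some (I,a).\<close>
type_synonym ('i,'a) sq = "('i \<times> 'a) option"

definition Seqs :: "'a list set \<Rightarrow> ('a list \<Rightarrow> plr) \<Rightarrow> ('a list \<Rightarrow> 'i) \<Rightarrow> plr \<Rightarrow> ('i,'a) sq set" where
  "Seqs H pl ifs i = {None} \<union> {Some (I, a) | I a. I \<in> Isets H pl ifs i \<and> a \<in> AI H ifs I}"

definition parseq :: "'a list set \<Rightarrow> ('a list \<Rightarrow> plr) \<Rightarrow> ('a list \<Rightarrow> 'i) \<Rightarrow> plr \<Rightarrow> 'i \<Rightarrow> ('i,'a) sq" where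
  "parseq H pl ifs i I = (let s = seqs pl ifs i (SOME h. h \<in> nodes H ifs I)
                          in if s = [] then None else Some (last s))"

definition connected :: "'a list set \<Rightarrow> ('a list \<Rightarrow> 'i) \<Rightarrow> 'i \<Rightarrow> 'i \<Rightarrow> bool" where
  "connected H ifs I J \<longleftrightarrow> (\<exists>v \<in> nodes H ifs I. \<exists>w \<in> nodes H ifs J.
      (\<exists>ys. v = w @ ys) \<or> (\<exists>ys. w = v @ ys))"

definition relevant :: "'a list set \<Rightarrow> ('a list \<Rightarrow> plr) \<Rightarrow> ('a list \<Rightarrow> 'i) \<Rightarrow> ('i,'a) sq \<Rightarrow> ('i,'a) sq \<Rightarrow> bool" where
  "relevant H pl ifs s1 s2 \<longleftrightarrow> s1 \<in> Seqs H pl ifs T1 \<and> s2 \<in> Seqs H pl ifs T2 \<and>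
     (case (s1, s2) of (Some (I, _), Some (J, _)) \<Rightarrow> connected H ifs I J | _ \<Rightarrow> True)"

definition rel_seq_iset :: "'a list set \<Rightarrow> ('a list \<Rightarrow> 'i) \<Rightarrow> ('i,'a) sq \<Rightarrow> 'i \<Rightarrow> bool" where
  "rel_seq_iset H ifs s I \<longleftrightarrow> (case s of None \<Rightarrow> True | Some (J, _) \<Rightarrow> connected H ifs J I)"

type_synonym ('i,'a) plan = "'i \<Rightarrow> 'a option"

definition reach :: "'a list set \<Rightarrow> ('a list \<Rightarrow> plr) \<Rightarrow> ('a list \<Rightarrow> 'i) \<Rightarrow> plr \<Rightarrow> ('i,'a) plan \<Rightarrow> 'i \<Rightarrow> bool" where
  "reach H pl ifs i p I \<longleftrightarrow> (\<exists>h \<in> nodes H ifs I. \<forall>(J, b) \<in> set (seqs pl ifs i h). p J = Some b)"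

definition Plans :: "'a list set \<Rightarrow> ('a list \<Rightarrow> plr) \<Rightarrow> ('a list \<Rightarrow> 'i) \<Rightarrow> plr \<Rightarrow> ('i,'a) plan set" where
  "Plans H pl ifs i = {p. \<forall>I. (p I \<noteq> None \<longleftrightarrow> I \<in> Isets H pl ifs i \<and> reach H pl ifs i p I) \<and>
                              (\<forall>a. p I = Some a \<longrightarrow> a \<in> AI H ifs I)}"

definition PlansOf :: "'a list set \<Rightarrow> ('a list \<Rightarrow> plr) \<Rightarrow> ('a list \<Rightarrow> 'i) \<Rightarrow> plr \<Rightarrow> ('i,'a) sq \<Rightarrow> ('i,'a) plan set" where
  "PlansOf H pl ifs i s = (case s of None \<Rightarrow> Plans H pl ifs i
     | Some (I, a) \<Rightarrow> {p \<in> Plans H pl ifs i. reach H pl ifs i p I \<and> p I = Some a})"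

text \<open>The map f from distributions over pairs of plans to vectors indexed by relevant pairs
  (we give its value at every pair; only relevant pairs are used)\<close>
definition fmap :: "'a list set \<Rightarrow> ('a list \<Rightarrow> plr) \<Rightarrow> ('a list \<Rightarrow> 'i) \<Rightarrow>
    (('i,'a) plan \<times> ('i,'a) plan) pmf \<Rightarrow> ('i,'a) sq \<Rightarrow> ('i,'a) sq \<Rightarrow> real" where
  "fmap H pl ifs \<mu> s1 s2 = (\<Sum>p1 \<in> PlansOf H pl ifs T1 s1. \<Sum>p2 \<in> PlansOf H pl ifs T2 s2. pmf \<mu> (p1, p2))"

text \<open>A vector indexed by relevant pairs is represented by a function; only its values
  on relevant pairs matter.\<close>
definition VSF :: "'a list set \<Rightarrow> ('a list \<Rightarrow> plr) \<Rightarrow> ('a list \<Rightarrow> 'i) \<Rightarrow>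
    (('i,'a) sq \<Rightarrow> ('i,'a) sq \<Rightarrow> real) set" where
  "VSF H pl ifs = {\<xi>.
     (\<forall>s1 s2. relevant H pl ifs s1 s2 \<longrightarrow> \<xi> s1 s2 \<ge> 0) \<and>
     \<xi> None None = 1 \<and>
     (\<forall>I \<in> Isets H pl ifs T1. \<forall>s2 \<in> Seqs H pl ifs T2. rel_seq_iset H ifs s2 I \<longrightarrow>
        (\<Sum>a \<in> AI H ifs I. \<xi> (Some (I, a)) s2) = \<xi> (parseq H pl ifs T1 I) s2) \<and>
     (\<forall>J \<in> Isets H pl ifs T2. \<forall>s1 \<in> Seqs H pl ifs T1. rel_seq_iset H ifs s1 J \<longrightarrow>
        (\<Sum>b \<in> AI H ifs J. \<xi> s1 (Some (J, b))) = \<xi> s1 (parseq H pl ifs T2 J))}"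

definition XiStar1 :: "'a list set \<Rightarrow> ('a list \<Rightarrow> plr) \<Rightarrow> ('a list \<Rightarrow> 'i) \<Rightarrow>
    (('i,'a) sq \<Rightarrow> ('i,'a) sq \<Rightarrow> real) set" where
  "XiStar1 H pl ifs = {\<xi> \<in> VSF H pl ifs. \<forall>s2 \<in> Seqs H pl ifs T2. \<xi> None s2 \<in> {0, 1}}"

definition XiStar2 :: "'a list set \<Rightarrow> ('a list \<Rightarrow> plr) \<Rightarrow> ('a list \<Rightarrow> 'i) \<Rightarrow>
    (('i,'a) sq \<Rightarrow> ('i,'a) sq \<Rightarrow> real) set" where
  "XiStar2 H pl ifs = {\<xi> \<in> VSF H pl ifs. \<forall>s1 \<in> Seqs H pl ifs T1. \<xi> s1 None \<in> {0, 1}}"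

end

(*
  Let \<xi> \<in> \<Xi>*_T1. Its marginal \<xi>[\<emptyset>, \<cdot>] is a realization plan of T2 with entries in {0, 1}.
  Following actions of positive mass gives a pure plan \<pi>2 along which this marginal is positive,
  hence equal to 1, so the marginal is exactly the realization plan of \<pi>2. Nonnegativity together
  with the T2-constraints of the polytope then force \<xi>[\<sigma>1, \<sigma>2] = \<xi>[\<sigma>1, \<emptyset>] [\<pi>2 \<in> \<Pi>_T2(\<sigma>2)].
  The other marginal \<xi>[\<cdot>, \<emptyset>] is a realization plan of T1, and by Kuhn's theorem in sequence form
  (proved by repeatedly peeling off a pure plan with maximal weight) it is realized by a mixed
  strategy \<mu>1; hence \<xi> = f(\<mu>1 \<otimes> \<delta>_\<pi>2). The statement for \<Xi>*_T2 follows by exchanging T1 and T2.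
*)

theory Submission
  imports Defs "HOL-Library.Sublist"
begin

section \<open>Sequences and relevant pairs\<close>

lemma seqs_Nil [simp]: "seqs pl ifs i [] = []"
  by (simp add: seqs_def)

lemma seqs_snoc:
  "seqs pl ifs i (h @ [a]) = seqs pl ifs i h @ (if pl h = i then [(ifs h, a)] else [])"
proof -
  have "filter (\<lambda>k. pl (take k (h @ [a])) = i) [0..<length h] = filter (\<lambda>k. pl (take k h) = i) [0..<length h]"
    by (rule filter_cong) auto
  moreover have "(ifs (take k (h @ [a])), (h @ [a]) ! k) = (ifs (take k h), h ! k)" if "k < length h" for k
    using that by (simp add: nth_append)
  ultimately show ?thesis
    by (simp add: seqs_def cong: map_cong)
qed

lemma seqs_eq_appendD:
  assumes "seqs pl ifs i h = xs @ (J, b) # ys"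
  shows "\<exists>k<length h. pl (take k h) = i \<and> ifs (take k h) = J \<and> h ! k = b \<and> seqs pl ifs i (take k h) = xs"
  using assms
proof (induction h arbitrary: ys rule: rev_induct)
  case Nil
  then show ?case by simp
next
  case (snoc c h)
  show ?case
  proof (cases "pl h = i \<and> ys = []")
    case True
    then show ?thesis
      using snoc.prems by (intro exI[of _ "length h"]) (auto simp: seqs_snoc)
  next
    case False
    then obtain ys' where "seqs pl ifs i h = xs @ (J, b) # ys'"
      using snoc.prems by (cases ys rule: rev_cases) (auto simp: seqs_snoc split: if_splits)
    then obtain k where "k < length h" "pl (take k h) = i" "ifs (take k h) = J" "h ! k = b"
        "seqs pl ifs i (take k h) = xs"
      using snoc.IH by blast
    then show ?thesis
      by (intro exI[of _ k]) (auto simp: nth_append)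
  qed
qed

lemma seqs_memD:
  assumes "(J, b) \<in> set (seqs pl ifs i h)"
  shows "\<exists>k<length h. pl (take k h) = i \<and> ifs (take k h) = J"
  using assms seqs_eq_appendD by (metis split_list)

lemma connected_iff_prefix:
  "connected H ifs I J \<longleftrightarrow> (\<exists>v\<in>nodes H ifs I. \<exists>w\<in>nodes H ifs J. prefix w v \<or> prefix v w)"
  unfolding connected_def prefix_def by blast

lemma connected_sym: "connected H ifs I J \<longleftrightarrow> connected H ifs J I"
  unfolding connected_def by blast

lemma Seqs_Some [simp]: "Some (I, a) \<in> Seqs H pl ifs i \<longleftrightarrow> I \<in> Isets H pl ifs i \<and> a \<in> AI H ifs I"
  by (auto simp: Seqs_def)

lemma Seqs_None [simp]: "None \<in> Seqs H pl ifs i"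
  by (simp add: Seqs_def)

lemma Seqs_eq: "Seqs H pl ifs i = insert None (Some ` Sigma (Isets H pl ifs i) (AI H ifs))"
  unfolding Seqs_def by auto

lemma PlansOf_subset_Plans: "PlansOf H pl ifs i s \<subseteq> Plans H pl ifs i"
  by (auto simp: PlansOf_def split: option.splits)

lemma rel_seq_iset_None [simp]: "rel_seq_iset H ifs None I"
  by (simp add: rel_seq_iset_def)

lemma relevant_Some_left:
  "relevant H pl ifs (Some (I, a)) s2 \<longleftrightarrow>
     I \<in> Isets H pl ifs T1 \<and> a \<in> AI H ifs I \<and> s2 \<in> Seqs H pl ifs T2 \<and> rel_seq_iset H ifs s2 I"
  by (cases s2) (auto simp: relevant_def rel_seq_iset_def connected_sym)

lemma relevant_Some_right:
  "relevant H pl ifs s1 (Some (J, b)) \<longleftrightarrow>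
     J \<in> Isets H pl ifs T2 \<and> b \<in> AI H ifs J \<and> s1 \<in> Seqs H pl ifs T1 \<and> rel_seq_iset H ifs s1 J"
  by (cases s1) (auto simp: relevant_def rel_seq_iset_def)

lemma relevant_None_left [simp]: "relevant H pl ifs None s2 \<longleftrightarrow> s2 \<in> Seqs H pl ifs T2"
  by (simp add: relevant_def)

lemma relevant_None_right [simp]: "relevant H pl ifs s1 None \<longleftrightarrow> s1 \<in> Seqs H pl ifs T1"
  by (simp add: relevant_def split: option.splits)

section \<open>Games with perfect recall\<close>

locale game =
  fixes H :: "'a list set" and pl :: "'a list \<Rightarrow> plr" and ifs :: "'a list \<Rightarrow> 'i"
  assumes wf: "wf_game H pl ifs"
begin

lemma finite_H: "finite H"
  using wf by (simp add: wf_game_def)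

lemma prefix_closed: "prefix xs ys \<Longrightarrow> ys \<in> H \<Longrightarrow> xs \<in> H"
proof (induction ys rule: rev_induct)
  case (snoc y ys)
  have "ys \<in> H"
    using snoc.prems(2) wf unfolding wf_game_def by blast
  then show ?case
    using snoc by (auto simp: prefix_snoc)
qed simp

lemma internal_take:
  assumes "h \<in> H" "k < length h"
  shows "internal H (take k h)" "take k h @ [h ! k] \<in> H"
proof -
  have "take k h @ [h ! k] = take (Suc k) h"
    using assms(2) by (simp add: take_Suc_conv_app_nth)
  then show "take k h @ [h ! k] \<in> H"
    using prefix_closed[OF take_is_prefix assms(1)] by metis
  then show "internal H (take k h)"
    using prefix_closed[OF take_is_prefix assms(1)] by (auto simp: internal_def)
qed

lemma same_player_and_actions:
  "internal H h \<Longrightarrow> internal H h' \<Longrightarrow> ifs h = ifs h' \<Longrightarrow> pl h = pl h' \<and> acts H h = acts H h'"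
  using wf unfolding wf_game_def by blast

lemma perfect_recall:
  "i \<noteq> Chance \<Longrightarrow> internal H h \<Longrightarrow> internal H h' \<Longrightarrow> pl h = i \<Longrightarrow> ifs h = ifs h' \<Longrightarrow>
   seqs pl ifs i h = seqs pl ifs i h'"
  using wf unfolding wf_game_def by blast

definition node_of :: "'i \<Rightarrow> 'a list" where
  "node_of I = (SOME h. h \<in> nodes H ifs I)"

text \<open>By perfect recall this is the sequence of player \<open>i\<close>'s own moves leading to any node of \<open>I\<close>.\<close>
definition own_seqs :: "plr \<Rightarrow> 'i \<Rightarrow> ('i \<times> 'a) list" where
  "own_seqs i I = seqs pl ifs i (node_of I)"

lemma node_of_in_nodes:
  assumes "I \<in> Isets H pl ifs i"
  shows "node_of I \<in> nodes H ifs I" "pl (node_of I) = i"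
proof -
  obtain h where h: "internal H h" "pl h = i" "ifs h = I"
    using assms unfolding Isets_def by blast
  then have "h \<in> nodes H ifs I"
    by (simp add: nodes_def)
  then show n: "node_of I \<in> nodes H ifs I"
    unfolding node_of_def by (rule someI)
  then show "pl (node_of I) = i"
    using same_player_and_actions[of "node_of I" h] h by (simp add: nodes_def)
qed

lemma seqs_nodes:
  assumes "i \<noteq> Chance" "I \<in> Isets H pl ifs i" "h \<in> nodes H ifs I"
  shows "seqs pl ifs i h = own_seqs i I"
proof -
  note rep = node_of_in_nodes[OF assms(2)]
  have h: "internal H h" "ifs h = ifs (node_of I)" and rep_internal: "internal H (node_of I)"
    using assms(3) rep(1) by (auto simp: nodes_def)
  have "pl h = i"
    using same_player_and_actions[OF h(1) rep_internal h(2)] rep(2) by simp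
  then show ?thesis
    unfolding own_seqs_def using perfect_recall[OF assms(1) h(1) rep_internal _ h(2)] by simp
qed

lemma AI_eq_acts:
  assumes "h \<in> nodes H ifs I"
  shows "AI H ifs I = acts H h"
proof -
  have "node_of I \<in> nodes H ifs I"
    using assms unfolding node_of_def by (rule someI)
  then have "acts H (node_of I) = acts H h"
    using same_player_and_actions[of "node_of I" h] assms by (simp add: nodes_def)
  then show ?thesis
    by (simp add: AI_def node_of_def)
qed

lemma own_seqs_eq_appendD:
  assumes "i \<noteq> Chance" "I \<in> Isets H pl ifs i" "own_seqs i I = xs @ (J, b) # ys"
  shows "J \<in> Isets H pl ifs i" "own_seqs i J = xs" "b \<in> AI H ifs J"
proof -
  have h: "node_of I \<in> H"
    using node_of_in_nodes[OF assms(2)] by (simp add: nodes_def internal_def)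
  obtain k where k: "k < length (node_of I)" "pl (take k (node_of I)) = i" "ifs (take k (node_of I)) = J"
      "node_of I ! k = b" "seqs pl ifs i (take k (node_of I)) = xs"
    using seqs_eq_appendD[OF assms(3)[unfolded own_seqs_def]] by blast
  have move: "internal H (take k (node_of I))" "take k (node_of I) @ [b] \<in> H"
    using internal_take[OF h k(1)] k(4) by auto
  then have node: "take k (node_of I) \<in> nodes H ifs J"
    using k(3) by (simp add: nodes_def)
  show J: "J \<in> Isets H pl ifs i"
    using move(1) k(2,3) by (auto simp: Isets_def)
  show "own_seqs i J = xs"
    using seqs_nodes[OF assms(1) J node] k(5) by simp
  show "b \<in> AI H ifs J"
    using AI_eq_acts[OF node] move(2) by (simp add: acts_def)
qed

lemma own_seqs_memD:
  assumes "i \<noteq> Chance" "I \<in> Isets H pl ifs i" "(J, b) \<in> set (own_seqs i I)"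
  shows "J \<in> Isets H pl ifs i" "set (own_seqs i J) \<subseteq> set (own_seqs i I)"
proof -
  obtain xs ys where split: "own_seqs i I = xs @ (J, b) # ys"
    using split_list[OF assms(3)] by blast
  then show "J \<in> Isets H pl ifs i" "set (own_seqs i J) \<subseteq> set (own_seqs i I)"
    using own_seqs_eq_appendD[OF assms(1,2) split] by auto
qed

lemma parseq_eq: "parseq H pl ifs i I = (if own_seqs i I = [] then None else Some (last (own_seqs i I)))"
  by (simp add: parseq_def own_seqs_def node_of_def Let_def)

lemma reach_iff_own_seqs:
  assumes "i \<noteq> Chance" "I \<in> Isets H pl ifs i"
  shows "reach H pl ifs i p I \<longleftrightarrow> (\<forall>(J, b)\<in>set (own_seqs i I). p J = Some b)"
  unfolding reach_def using seqs_nodes[OF assms] node_of_in_nodes(1)[OF assms(2)] by auto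

lemma finite_Isets: "finite (Isets H pl ifs i)"
proof -
  have "Isets H pl ifs i \<subseteq> ifs ` H"
    by (auto simp: Isets_def internal_def)
  then show ?thesis
    using finite_H finite_subset by blast
qed

lemma finite_acts: "finite (acts H h)"
proof -
  have "acts H h = (\<lambda>a. h @ [a]) -` H"
    by (auto simp: acts_def)
  then show ?thesis
    using finite_vimageI[OF finite_H, of "\<lambda>a. h @ [a]"] by (simp add: inj_def)
qed

lemma finite_AI: "finite (AI H ifs I)"
  unfolding AI_def by (rule finite_acts)

lemma AI_nonempty:
  assumes "I \<in> Isets H pl ifs i"
  shows "AI H ifs I \<noteq> {}"
proof -
  note node = node_of_in_nodes(1)[OF assms]
  then obtain a where "node_of I @ [a] \<in> H"
    by (auto simp: nodes_def internal_def)
  then show ?thesis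
    using AI_eq_acts[OF node] by (auto simp: acts_def)
qed

lemma finite_Seqs: "finite (Seqs H pl ifs i)"
  unfolding Seqs_eq using finite_Isets finite_AI by blast

lemma finite_Plans: "finite (Plans H pl ifs i)"
proof -
  let ?S = "Isets H pl ifs i"
  let ?F = "PiE ?S (\<lambda>I. insert None (Some ` AI H ifs I))"
  have "Plans H pl ifs i \<subseteq> (\<lambda>f I. if I \<in> ?S then f I else None) ` ?F"
  proof
    fix p assume p: "p \<in> Plans H pl ifs i"
    then have "p I \<in> insert None (Some ` AI H ifs I)" for I
      by (cases "p I") (auto simp: Plans_def)
    then have "restrict p ?S \<in> ?F"
      by simp
    moreover have "p = (\<lambda>I. if I \<in> ?S then restrict p ?S I else None)"
      using p by (force simp: fun_eq_iff Plans_def)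
    ultimately show "p \<in> (\<lambda>f I. if I \<in> ?S then f I else None) ` ?F"
      by blast
  qed
  moreover have "finite ?F"
    using finite_Isets finite_AI by (intro finite_PiE) auto
  ultimately show ?thesis
    using finite_subset by blast
qed

lemma finite_PlansOf: "finite (PlansOf H pl ifs i s)"
  by (rule finite_subset[OF PlansOf_subset_Plans finite_Plans])

lemma parseq_cases:
  assumes "i \<noteq> Chance" "I \<in> Isets H pl ifs i"
  obtains "parseq H pl ifs i I = None" "own_seqs i I = []"
  | J b where "parseq H pl ifs i I = Some (J, b)" "own_seqs i I = own_seqs i J @ [(J, b)]"
      "J \<in> Isets H pl ifs i" "b \<in> AI H ifs J"
proof (cases "own_seqs i I" rule: rev_cases)
  case Nil
  then show ?thesis
    using that(1) by (simp add: parseq_eq)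
next
  case (snoc xs Jb)
  obtain J b where Jb: "Jb = (J, b)"
    by fastforce
  then have "own_seqs i I = xs @ (J, b) # []"
    using snoc by simp
  note split = own_seqs_eq_appendD[OF assms this]
  then show ?thesis
    using that(2)[of J b] snoc Jb by (simp add: parseq_eq)
qed

lemma parseq_in_Seqs: "i \<noteq> Chance \<Longrightarrow> I \<in> Isets H pl ifs i \<Longrightarrow> parseq H pl ifs i I \<in> Seqs H pl ifs i"
  by (cases rule: parseq_cases) auto

definition seq_depth :: "plr \<Rightarrow> ('i, 'a) sq \<Rightarrow> nat" where
  "seq_depth i s = (case s of None \<Rightarrow> 0 | Some (I, a) \<Rightarrow> Suc (length (own_seqs i I)))"

lemma seq_depth_parseq_less:
  "i \<noteq> Chance \<Longrightarrow> I \<in> Isets H pl ifs i \<Longrightarrow> seq_depth i (parseq H pl ifs i I) < seq_depth i (Some (I, a))"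
  by (cases rule: parseq_cases) (auto simp: seq_depth_def)

lemma PlansOf_parseq_iff_reach:
  assumes "i \<noteq> Chance" "p \<in> Plans H pl ifs i" "I \<in> Isets H pl ifs i"
  shows "p \<in> PlansOf H pl ifs i (parseq H pl ifs i I) \<longleftrightarrow> reach H pl ifs i p I"
  using assms(1,3)
proof (cases rule: parseq_cases)
  case 1
  then show ?thesis
    using assms reach_iff_own_seqs[OF assms(1,3)] by (simp add: PlansOf_def)
next
  case (2 J b)
  then show ?thesis
    using assms reach_iff_own_seqs[OF assms(1,3)] reach_iff_own_seqs[OF assms(1) 2(3)]
    by (auto simp: PlansOf_def)
qed

lemma connected_own_seqs:
  assumes "i \<noteq> Chance" "I \<in> Isets H pl ifs i" "connected H ifs J I" "(I', a') \<in> set (own_seqs i I)"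
  shows "connected H ifs J I'"
proof -
  obtain v w where v: "v \<in> nodes H ifs J" and w: "w \<in> nodes H ifs I" and vw: "prefix w v \<or> prefix v w"
    using assms(3) unfolding connected_iff_prefix by blast
  obtain k where k: "k < length w" "ifs (take k w) = I'"
    using seqs_memD assms(4) seqs_nodes[OF assms(1,2) w] by metis
  have "w \<in> H"
    using w by (simp add: nodes_def internal_def)
  then have u: "take k w \<in> nodes H ifs I'"
    using internal_take(1)[OF _ k(1)] k(2) by (simp add: nodes_def)
  have "prefix (take k w) v \<or> prefix v (take k w)"
    using vw take_is_prefix[of k w] prefix_same_cases prefix_order.trans by metis
  then show ?thesis
    unfolding connected_iff_prefix using v u by blast
qed

lemma rel_seq_iset_parseq:
  assumes "i \<noteq> Chance" "I \<in> Isets H pl ifs i" "rel_seq_iset H ifs s I"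
    and "parseq H pl ifs i I = Some (I', a')"
  shows "rel_seq_iset H ifs s I'"
  using assms(1,2)
proof (cases rule: parseq_cases)
  case (2 J b)
  then have "(I', a') \<in> set (own_seqs i I)"
    using assms(4) by simp
  then show ?thesis
    using assms(3) connected_own_seqs[OF assms(1,2)] by (auto simp: rel_seq_iset_def split: option.splits)
qed (use assms(4) in simp)

lemma relevant_parseq_left:
  assumes "relevant H pl ifs (Some (I, a)) s2"
  shows "relevant H pl ifs (parseq H pl ifs T1 I) s2"
proof -
  have I: "I \<in> Isets H pl ifs T1"
    using assms by (simp add: relevant_Some_left)
  then show ?thesis
    using assms parseq_in_Seqs[of T1 I] rel_seq_iset_parseq[of T1 I]
    by (cases "parseq H pl ifs T1 I") (auto simp: relevant_Some_left)
qed

lemma relevant_parseq_right: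
  assumes "relevant H pl ifs s1 (Some (J, b))"
  shows "relevant H pl ifs s1 (parseq H pl ifs T2 J)"
proof -
  have J: "J \<in> Isets H pl ifs T2"
    using assms by (simp add: relevant_Some_right)
  then show ?thesis
    using assms parseq_in_Seqs[of T2 J] rel_seq_iset_parseq[of T2 J]
    by (cases "parseq H pl ifs T2 J") (auto simp: relevant_Some_right)
qed

section \<open>Realization plans and Kuhn's theorem\<close>

definition seq_flow :: "plr \<Rightarrow> (('i, 'a) sq \<Rightarrow> real) \<Rightarrow> bool" where
  "seq_flow i x \<longleftrightarrow> (\<forall>s\<in>Seqs H pl ifs i. 0 \<le> x s) \<and>
     (\<forall>I\<in>Isets H pl ifs i. (\<Sum>a\<in>AI H ifs I. x (Some (I, a))) = x (parseq H pl ifs i I))"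

definition realization_plan :: "plr \<Rightarrow> (('i, 'a) sq \<Rightarrow> real) \<Rightarrow> bool" where
  "realization_plan i x \<longleftrightarrow> seq_flow i x \<and> x None = 1"

lemma seq_flow_combination:
  assumes "seq_flow i x" "seq_flow i y" "\<forall>s\<in>Seqs H pl ifs i. 0 \<le> \<alpha> * x s + \<beta> * y s"
  shows "seq_flow i (\<lambda>s. \<alpha> * x s + \<beta> * y s)"
  using assms by (simp add: seq_flow_def sum.distrib flip: sum_distrib_left)

lemma seq_flow_le_parseq:
  assumes "seq_flow i x" "I \<in> Isets H pl ifs i" "a \<in> AI H ifs I"
  shows "x (Some (I, a)) \<le> x (parseq H pl ifs i I)"
proof -
  have "x (Some (I, a)) \<le> (\<Sum>a\<in>AI H ifs I. x (Some (I, a)))"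
    using assms finite_AI by (intro member_le_sum) (auto simp: seq_flow_def)
  then show ?thesis
    using assms by (simp add: seq_flow_def)
qed

lemma seq_flow_le_root:
  assumes "i \<noteq> Chance" "seq_flow i x" "s \<in> Seqs H pl ifs i"
  shows "x s \<le> x None"
  using assms(3)
proof (induction "seq_depth i s" arbitrary: s rule: less_induct)
  case less
  show ?case
  proof (cases s)
    case (Some Ia)
    then obtain I a where s: "s = Some (I, a)" and I: "I \<in> Isets H pl ifs i" "a \<in> AI H ifs I"
      using less.prems by (cases Ia) auto
    have "x (parseq H pl ifs i I) \<le> x None"
      using less.hyps seq_depth_parseq_less[OF assms(1) I(1)] parseq_in_Seqs[OF assms(1) I(1)] s by blast
    then show ?thesis
      using seq_flow_le_parseq[OF assms(2) I] s by simp
  qed simp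
qed

lemma seq_flow_zero:
  "i \<noteq> Chance \<Longrightarrow> seq_flow i x \<Longrightarrow> x None = 0 \<Longrightarrow> s \<in> Seqs H pl ifs i \<Longrightarrow> x s = 0"
  using seq_flow_le_root[of i x s] by (fastforce simp: seq_flow_def)

definition pure_realization :: "plr \<Rightarrow> ('i, 'a) plan \<Rightarrow> ('i, 'a) sq \<Rightarrow> real" where
  "pure_realization i p s = (if p \<in> PlansOf H pl ifs i s then 1 else 0)"

lemma realization_plan_pure_realization:
  assumes "i \<noteq> Chance" "p \<in> Plans H pl ifs i"
  shows "realization_plan i (pure_realization i p)"
proof -
  have "(\<Sum>b\<in>AI H ifs I. pure_realization i p (Some (I, b))) = pure_realization i p (parseq H pl ifs i I)"
    if I: "I \<in> Isets H pl ifs i" for I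
  proof (cases "reach H pl ifs i p I")
    case True
    then obtain c where c: "p I = Some c" "c \<in> AI H ifs I"
      using assms(2) I unfolding Plans_def by blast
    have "(\<Sum>b\<in>AI H ifs I. pure_realization i p (Some (I, b))) = (\<Sum>b\<in>AI H ifs I. if b = c then 1 else 0)"
      using True c assms(2) by (intro sum.cong) (auto simp: PlansOf_def pure_realization_def)
    also have "\<dots> = 1"
      using c finite_AI by simp
    finally show ?thesis
      using PlansOf_parseq_iff_reach[OF assms I] True by (simp add: pure_realization_def)
  next
    case False
    then show ?thesis
      using PlansOf_parseq_iff_reach[OF assms I] by (simp add: PlansOf_def pure_realization_def)
  qed
  moreover have "p \<in> PlansOf H pl ifs i None"
    using assms by (simp add: PlansOf_def)
  ultimately show ?thesis
    by (simp add: realization_plan_def seq_flow_def pure_realization_def)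
qed

text \<open>The difference with the realization plan of \<open>p\<close> is a nonnegative flow with no mass at the root.\<close>
lemma realization_plan_eq_pure:
  assumes "i \<noteq> Chance" "realization_plan i x" "p \<in> Plans H pl ifs i"
    and ge1: "\<forall>s\<in>Seqs H pl ifs i. p \<in> PlansOf H pl ifs i s \<longrightarrow> 1 \<le> x s"
    and "s \<in> Seqs H pl ifs i"
  shows "x s = pure_realization i p s"
proof -
  note pure = realization_plan_pure_realization[OF assms(1,3)]
  have "\<forall>s\<in>Seqs H pl ifs i. 0 \<le> 1 * x s + (- 1) * pure_realization i p s"
    using ge1 assms(2) by (auto simp: pure_realization_def realization_plan_def seq_flow_def)
  then have "seq_flow i (\<lambda>s. 1 * x s + (- 1) * pure_realization i p s)"
    using assms(2) pure by (intro seq_flow_combination) (auto simp: realization_plan_def)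
  moreover have "1 * x None + (- 1) * pure_realization i p None = 0"
    using assms(2) pure by (simp add: realization_plan_def)
  ultimately show ?thesis
    using seq_flow_zero[OF assms(1) _ _ assms(5)] by fastforce
qed

definition follow_choice :: "plr \<Rightarrow> ('i \<Rightarrow> 'a) \<Rightarrow> ('i, 'a) plan" where
  "follow_choice i c I =
     (if I \<in> Isets H pl ifs i \<and> (\<forall>(J, b)\<in>set (own_seqs i I). c J = b) then Some (c I) else None)"

lemma reach_follow_choice:
  assumes "i \<noteq> Chance" "I \<in> Isets H pl ifs i"
  shows "reach H pl ifs i (follow_choice i c) I \<longleftrightarrow> (\<forall>(J, b)\<in>set (own_seqs i I). c J = b)"
  unfolding reach_iff_own_seqs[OF assms]
proof
  assume "\<forall>(J, b)\<in>set (own_seqs i I). follow_choice i c J = Some b"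
  then show "\<forall>(J, b)\<in>set (own_seqs i I). c J = b"
    by (auto simp: follow_choice_def split: if_splits)
next
  assume c: "\<forall>(J, b)\<in>set (own_seqs i I). c J = b"
  show "\<forall>(J, b)\<in>set (own_seqs i I). follow_choice i c J = Some b"
  proof clarify
    fix J b assume Jb: "(J, b) \<in> set (own_seqs i I)"
    with c own_seqs_memD[OF assms Jb] show "follow_choice i c J = Some b"
      by (auto simp: follow_choice_def)
  qed
qed

lemma follow_choice_in_Plans:
  assumes "i \<noteq> Chance" "\<forall>I\<in>Isets H pl ifs i. c I \<in> AI H ifs I"
  shows "follow_choice i c \<in> Plans H pl ifs i"
  using assms reach_follow_choice[OF assms(1)] by (auto simp: Plans_def follow_choice_def)

lemma exists_positive_action:
  assumes "seq_flow i x" "I \<in> Isets H pl ifs i"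
  shows "\<exists>a\<in>AI H ifs I. 0 < x (parseq H pl ifs i I) \<longrightarrow> 0 < x (Some (I, a))"
proof (cases "0 < x (parseq H pl ifs i I)")
  case True
  have "(\<Sum>a\<in>AI H ifs I. x (Some (I, a))) = x (parseq H pl ifs i I)"
    using assms by (simp add: seq_flow_def)
  then have "\<not> (\<forall>a\<in>AI H ifs I. x (Some (I, a)) \<le> 0)"
    using True sum_nonpos[of "AI H ifs I" "\<lambda>a. x (Some (I, a))"] by fastforce
  then show ?thesis
    by force
next
  case False
  then show ?thesis
    using AI_nonempty[OF assms(2)] by blast
qed

text \<open>Choose at every information set an action of positive mass whenever its parent sequence
  has positive mass, and follow these choices.\<close>
lemma exists_plan_in_support:
  assumes "i \<noteq> Chance" "realization_plan i x"
  obtains p where "p \<in> Plans H pl ifs i" "\<forall>s\<in>Seqs H pl ifs i. p \<in> PlansOf H pl ifs i s \<longrightarrow> 0 < x s"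
proof -
  have flow: "seq_flow i x"
    using assms(2) by (simp add: realization_plan_def)
  have "\<forall>I\<in>Isets H pl ifs i. \<exists>a. a \<in> AI H ifs I \<and> (0 < x (parseq H pl ifs i I) \<longrightarrow> 0 < x (Some (I, a)))"
    using exists_positive_action[OF flow] by blast
  from bchoice[OF this] obtain c where c: "\<forall>I\<in>Isets H pl ifs i. c I \<in> AI H ifs I \<and>
      (0 < x (parseq H pl ifs i I) \<longrightarrow> 0 < x (Some (I, c I)))"
    by blast
  let ?p = "follow_choice i c"
  have p: "?p \<in> Plans H pl ifs i"
    using follow_choice_in_Plans[OF assms(1)] c by blast
  have "0 < x s" if "s \<in> Seqs H pl ifs i" "?p \<in> PlansOf H pl ifs i s" for s
    using that
  proof (induction "seq_depth i s" arbitrary: s rule: less_induct)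
    case less
    show ?case
    proof (cases s)
      case None
      then show ?thesis
        using assms(2) by (simp add: realization_plan_def)
    next
      case (Some Ib)
      then obtain I b where s: "s = Some (I, b)" and I: "I \<in> Isets H pl ifs i"
        using less.prems by (cases Ib) auto
      have reach: "reach H pl ifs i ?p I" "?p I = Some b"
        using less.prems s by (auto simp: PlansOf_def)
      have "0 < x (parseq H pl ifs i I)"
        using less.hyps[OF _ parseq_in_Seqs[OF assms(1) I]] seq_depth_parseq_less[OF assms(1) I]
          PlansOf_parseq_iff_reach[OF assms(1) p I] reach(1) s by blast
      then show ?thesis
        using c I reach(2) s by (auto simp: follow_choice_def split: if_splits)
    qed
  qed
  then show ?thesis
    using that p by blast
qed

definition realizes :: "plr \<Rightarrow> ('i, 'a) plan pmf \<Rightarrow> (('i, 'a) sq \<Rightarrow> real) \<Rightarrow> bool" where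
  "realizes i \<mu> x \<longleftrightarrow> set_pmf \<mu> \<subseteq> Plans H pl ifs i \<and>
     (\<forall>s\<in>Seqs H pl ifs i. (\<Sum>p\<in>PlansOf H pl ifs i s. pmf \<mu> p) = x s)"

lemma realizes_cong: "realizes i \<mu> x \<Longrightarrow> (\<And>s. s \<in> Seqs H pl ifs i \<Longrightarrow> x s = y s) \<Longrightarrow> realizes i \<mu> y"
  by (simp add: realizes_def)

lemma realizes_return: "p \<in> Plans H pl ifs i \<Longrightarrow> realizes i (return_pmf p) (pure_realization i p)"
  by (simp add: realizes_def pure_realization_def finite_PlansOf indicator_def)

lemma realizes_mixture:
  assumes "realizes i \<mu> x" "realizes i \<nu> y" "0 \<le> l" "l \<le> 1"
  shows "realizes i (bernoulli_pmf l \<bind> (\<lambda>b. if b then \<mu> else \<nu>)) (\<lambda>s. l * x s + (1 - l) * y s)"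
proof -
  have "pmf (bernoulli_pmf l \<bind> (\<lambda>b. if b then \<mu> else \<nu>)) p = l * pmf \<mu> p + (1 - l) * pmf \<nu> p" for p
    unfolding pmf_bind using assms(3,4) by simp
  then show ?thesis
    using assms(1,2) by (auto simp: realizes_def sum.distrib split: if_splits simp flip: sum_distrib_left)
qed

lemma realization_plan_peel:
  assumes "i \<noteq> Chance" "realization_plan i x" "p \<in> Plans H pl ifs i" "l < 1"
    and le: "\<forall>s\<in>Seqs H pl ifs i. p \<in> PlansOf H pl ifs i s \<longrightarrow> l \<le> x s"
  shows "realization_plan i (\<lambda>s. (x s - l * pure_realization i p s) / (1 - l))"
proof -
  note pure = realization_plan_pure_realization[OF assms(1,3)]
  have eq: "(x s - l * pure_realization i p s) / (1 - l) =
      1 / (1 - l) * x s + (- l / (1 - l)) * pure_realization i p s" for s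
    by (simp add: diff_divide_distrib)
  have "0 \<le> x s - l * pure_realization i p s" if "s \<in> Seqs H pl ifs i" for s
    using le that assms(2) by (auto simp: pure_realization_def realization_plan_def seq_flow_def)
  then have "\<forall>s\<in>Seqs H pl ifs i. 0 \<le> (x s - l * pure_realization i p s) / (1 - l)"
    using assms(4) by simp
  then have "seq_flow i (\<lambda>s. (x s - l * pure_realization i p s) / (1 - l))"
    unfolding eq using assms(2) pure by (intro seq_flow_combination) (auto simp: realization_plan_def)
  moreover have "(x None - l * pure_realization i p None) / (1 - l) = 1"
    using assms(2,4) pure by (simp add: realization_plan_def)
  ultimately show ?thesis
    by (simp add: realization_plan_def)
qed

text \<open>Peel off a pure plan \<open>p\<close> in the support with the
  largest weight \<open>l\<close> it admits; the rescaled remainder is a realization plan whose support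
  misses a sequence where the minimum \<open>l\<close> is attained.\<close>
theorem realization_plan_realizable:
  assumes "i \<noteq> Chance" "realization_plan i x"
  shows "\<exists>\<mu>. realizes i \<mu> x"
  using assms(2)
proof (induction "card {s\<in>Seqs H pl ifs i. x s \<noteq> 0}" arbitrary: x rule: less_induct)
  case less
  obtain p where p: "p \<in> Plans H pl ifs i" and supp: "\<forall>s\<in>Seqs H pl ifs i. p \<in> PlansOf H pl ifs i s \<longrightarrow> 0 < x s"
    using exists_plan_in_support[OF assms(1) less.prems] by blast
  let ?A = "{s\<in>Seqs H pl ifs i. p \<in> PlansOf H pl ifs i s}"
  define l where "l = Min (x ` ?A)"
  have root: "None \<in> ?A"
    using p by (simp add: PlansOf_def)
  have l_le: "\<forall>s\<in>Seqs H pl ifs i. p \<in> PlansOf H pl ifs i s \<longrightarrow> l \<le> x s"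
    using finite_Seqs by (simp add: l_def)
  have "l \<in> x ` ?A"
    unfolding l_def using finite_Seqs[of i] root by (intro Min_in) force+
  then obtain s0 where s0: "s0 \<in> ?A" "x s0 = l"
    by blast
  have l: "0 < l" "l \<le> 1"
    using s0 supp l_le root less.prems by (auto simp: realization_plan_def)
  show ?case
  proof (cases "l = 1")
    case True
    then have "pure_realization i p s = x s" if "s \<in> Seqs H pl ifs i" for s
      using realization_plan_eq_pure[OF assms(1) less.prems p _ that] l_le by simp
    then show ?thesis
      using realizes_cong[OF realizes_return[OF p]] by blast
  next
    case False
    define y where "y s = (x s - l * pure_realization i p s) / (1 - l)" for s
    have y: "realization_plan i y"
      unfolding y_def using realization_plan_peel[OF assms(1) less.prems p _ l_le] False l by simp
    have "y s = 0" if "x s = 0" "s \<in> Seqs H pl ifs i" for s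
      using supp that by (auto simp: y_def pure_realization_def)
    moreover have "y s0 = 0" "x s0 \<noteq> 0"
      using s0 l by (simp_all add: y_def pure_realization_def)
    ultimately have "{s\<in>Seqs H pl ifs i. y s \<noteq> 0} \<subset> {s\<in>Seqs H pl ifs i. x s \<noteq> 0}"
      using s0(1) by blast
    then have "card {s\<in>Seqs H pl ifs i. y s \<noteq> 0} < card {s\<in>Seqs H pl ifs i. x s \<noteq> 0}"
      using finite_Seqs by (intro psubset_card_mono) auto
    then obtain \<nu> where "realizes i \<nu> y"
      using less.hyps y by blast
    from realizes_mixture[OF realizes_return[OF p] this] l
    have "realizes i (bernoulli_pmf l \<bind> (\<lambda>b. if b then return_pmf p else \<nu>))
        (\<lambda>s. l * pure_realization i p s + (1 - l) * y s)"
      by simp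
    moreover have "l * pure_realization i p s + (1 - l) * y s = x s" for s
      using False by (simp add: y_def)
    ultimately show ?thesis
      using realizes_cong by blast
  qed
qed

section \<open>The von Stengel--Forges polytope\<close>

lemma VSF_marginal_left:
  assumes "\<xi> \<in> VSF H pl ifs"
  shows "realization_plan T1 (\<lambda>s1. \<xi> s1 None)"
  using assms unfolding VSF_def realization_plan_def seq_flow_def by auto

lemma VSF_marginal_right:
  assumes "\<xi> \<in> VSF H pl ifs"
  shows "realization_plan T2 (\<lambda>s2. \<xi> None s2)"
  using assms unfolding VSF_def realization_plan_def seq_flow_def by auto

lemma VSF_le_marginal_right:
  assumes "\<xi> \<in> VSF H pl ifs" "relevant H pl ifs s1 s2"
  shows "\<xi> s1 s2 \<le> \<xi> None s2"
  using assms(2)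
proof (induction "seq_depth T1 s1" arbitrary: s1 rule: less_induct)
  case less
  show ?case
  proof (cases s1)
    case (Some Ia)
    then obtain I a where s1: "s1 = Some (I, a)"
      by (cases Ia) auto
    then have rel: "I \<in> Isets H pl ifs T1" "a \<in> AI H ifs I" "s2 \<in> Seqs H pl ifs T2" "rel_seq_iset H ifs s2 I"
      using less.prems by (simp_all add: relevant_Some_left)
    have "\<xi> (Some (I, a)) s2 \<le> (\<Sum>a\<in>AI H ifs I. \<xi> (Some (I, a)) s2)"
      using rel assms(1) finite_AI by (intro member_le_sum) (auto simp: VSF_def relevant_Some_left)
    also have "\<dots> = \<xi> (parseq H pl ifs T1 I) s2"
      using rel assms(1) by (simp add: VSF_def)
    also have "\<dots> \<le> \<xi> None s2"
      using less.hyps[OF _ relevant_parseq_left] less.prems seq_depth_parseq_less[of T1 I a] rel(1) s1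
      by simp
    finally show ?thesis
      using s1 by simp
  qed simp
qed

text \<open>Mass outside \<open>\<pi>2\<close> vanishes by the bound above, and along \<open>\<pi>2\<close> each constraint of
  player \<open>T2\<close> has a single nonzero term.\<close>
lemma VSF_factorizes:
  assumes V: "\<xi> \<in> VSF H pl ifs" and \<pi>2: "\<pi>2 \<in> Plans H pl ifs T2"
    and marginal: "\<forall>s2\<in>Seqs H pl ifs T2. \<xi> None s2 = pure_realization T2 \<pi>2 s2"
    and "relevant H pl ifs s1 s2"
  shows "\<xi> s1 s2 = \<xi> s1 None * pure_realization T2 \<pi>2 s2"
proof -
  have zero: "\<xi> s1 s2 = 0" if r: "relevant H pl ifs s1 s2" "\<pi>2 \<notin> PlansOf H pl ifs T2 s2" for s1 s2
  proof -
    have "\<xi> None s2 = 0"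
      using marginal r by (simp add: relevant_def pure_realization_def)
    moreover have "0 \<le> \<xi> s1 s2"
      using V r(1) by (simp add: VSF_def)
    ultimately show ?thesis
      using VSF_le_marginal_right[OF V r(1)] by simp
  qed
  have "\<xi> s1 s2 = \<xi> s1 None" if "relevant H pl ifs s1 s2" "\<pi>2 \<in> PlansOf H pl ifs T2 s2"
    using that
  proof (induction "seq_depth T2 s2" arbitrary: s2 rule: less_induct)
    case less
    show ?case
    proof (cases s2)
      case (Some Jb)
      then obtain J b where s2: "s2 = Some (J, b)"
        by (cases Jb) auto
      then have rel: "J \<in> Isets H pl ifs T2" "b \<in> AI H ifs J" "s1 \<in> Seqs H pl ifs T1"
          "rel_seq_iset H ifs s1 J"
        using less.prems(1) by (simp_all add: relevant_Some_right)
      have \<pi>2J: "reach H pl ifs T2 \<pi>2 J" "\<pi>2 J = Some b"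
        using less.prems(2) s2 by (auto simp: PlansOf_def)
      have "\<xi> s1 (Some (J, b')) = 0" if "b' \<in> AI H ifs J" "b' \<noteq> b" for b'
        using zero[of s1 "Some (J, b')"] rel that \<pi>2J by (simp add: relevant_Some_right PlansOf_def)
      then have "(\<Sum>b'\<in>AI H ifs J. \<xi> s1 (Some (J, b'))) = \<xi> s1 (Some (J, b))"
        using rel(2) finite_AI by (subst sum.remove[of _ b]) (auto intro: sum.neutral)
      also have "(\<Sum>b'\<in>AI H ifs J. \<xi> s1 (Some (J, b'))) = \<xi> s1 (parseq H pl ifs T2 J)"
        using V rel by (simp add: VSF_def)
      also have "\<dots> = \<xi> s1 None"
        using less.hyps[OF _ relevant_parseq_right[OF less.prems(1)[unfolded s2]]]
          seq_depth_parseq_less[of T2 J b] PlansOf_parseq_iff_reach[of T2 \<pi>2 J] \<pi>2 \<pi>2J(1) rel(1) s2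
        by simp
      finally show ?thesis
        using s2 by simp
    qed simp
  qed
  then show ?thesis
    using zero assms(4) by (auto simp: pure_realization_def)
qed

lemma fmap_pair_return:
  "fmap H pl ifs (pair_pmf \<mu> (return_pmf \<pi>)) s1 s2 =
     (\<Sum>p\<in>PlansOf H pl ifs T1 s1. pmf \<mu> p) * pure_realization T2 \<pi> s2"
  by (simp add: fmap_def pmf_pair indicator_def finite_PlansOf pure_realization_def sum_distrib_right
      flip: sum_distrib_left)

theorem XiStar1_decomposition:
  assumes "\<xi> \<in> XiStar1 H pl ifs"
  shows "\<exists>\<mu>1 \<pi>2. set_pmf \<mu>1 \<subseteq> Plans H pl ifs T1 \<and> \<pi>2 \<in> Plans H pl ifs T2 \<and>
    (\<forall>s1 s2. relevant H pl ifs s1 s2 \<longrightarrow> \<xi> s1 s2 = fmap H pl ifs (pair_pmf \<mu>1 (return_pmf \<pi>2)) s1 s2) \<and>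
    (\<forall>s2\<in>Seqs H pl ifs T2. \<xi> None s2 = (if \<pi>2 \<in> PlansOf H pl ifs T2 s2 then 1 else 0))"
proof -
  have V: "\<xi> \<in> VSF H pl ifs" and binary: "\<forall>s2\<in>Seqs H pl ifs T2. \<xi> None s2 \<in> {0, 1}"
    using assms by (simp_all add: XiStar1_def)
  note right = VSF_marginal_right[OF V]
  obtain \<pi>2 where \<pi>2: "\<pi>2 \<in> Plans H pl ifs T2"
      and supp: "\<forall>s2\<in>Seqs H pl ifs T2. \<pi>2 \<in> PlansOf H pl ifs T2 s2 \<longrightarrow> 0 < \<xi> None s2"
    using exists_plan_in_support[OF _ right] by blast
  have "\<forall>s2\<in>Seqs H pl ifs T2. \<pi>2 \<in> PlansOf H pl ifs T2 s2 \<longrightarrow> 1 \<le> \<xi> None s2"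
    using supp binary by fastforce
  then have marginal: "\<forall>s2\<in>Seqs H pl ifs T2. \<xi> None s2 = pure_realization T2 \<pi>2 s2"
    using realization_plan_eq_pure[OF _ right \<pi>2] by simp
  obtain \<mu>1 where \<mu>1: "realizes T1 \<mu>1 (\<lambda>s1. \<xi> s1 None)"
    using realization_plan_realizable[OF _ VSF_marginal_left[OF V]] by blast
  have "\<forall>s1 s2. relevant H pl ifs s1 s2 \<longrightarrow> \<xi> s1 s2 = fmap H pl ifs (pair_pmf \<mu>1 (return_pmf \<pi>2)) s1 s2"
    using VSF_factorizes[OF V \<pi>2 marginal] \<mu>1 by (simp add: fmap_pair_return realizes_def relevant_def)
  moreover have "set_pmf \<mu>1 \<subseteq> Plans H pl ifs T1"
    using \<mu>1 by (simp add: realizes_def)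
  ultimately show ?thesis
    using \<pi>2 marginal unfolding pure_realization_def by blast
qed

end

section \<open>Exchanging the two team members\<close>

fun swap_teams :: "plr \<Rightarrow> plr" where
  "swap_teams T1 = T2"
| "swap_teams T2 = T1"
| "swap_teams x = x"

lemma swap_teams_swap_teams [simp]: "swap_teams (swap_teams x) = x"
  by (cases x) simp_all

lemma swap_teams_eq_iff: "swap_teams x = y \<longleftrightarrow> x = swap_teams y"
  by auto

lemma swap_teams_eq_Chance_iff [simp]: "swap_teams x = Chance \<longleftrightarrow> x = Chance"
  by (cases x) simp_all

lemma seqs_swap_teams: "seqs (swap_teams \<circ> pl) ifs i h = seqs pl ifs (swap_teams i) h"
  unfolding seqs_def by (simp add: swap_teams_eq_iff)

lemma Isets_swap_teams: "Isets H (swap_teams \<circ> pl) ifs i = Isets H pl ifs (swap_teams i)"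
  unfolding Isets_def by (simp add: swap_teams_eq_iff)

lemma wf_game_swap_teams:
  assumes "wf_game H pl ifs"
  shows "wf_game H (swap_teams \<circ> pl) ifs"
proof -
  have tree: "finite H" "[] \<in> H" "\<forall>h a. h @ [a] \<in> H \<longrightarrow> h \<in> H"
    and isets: "\<forall>h h'. internal H h \<and> internal H h' \<and> ifs h = ifs h' \<longrightarrow> pl h = pl h' \<and> acts H h = acts H h'"
    and recall: "\<forall>i h h'. i \<noteq> Chance \<and> internal H h \<and> internal H h' \<and> pl h = i \<and> ifs h = ifs h'
      \<longrightarrow> seqs pl ifs i h = seqs pl ifs i h'"
    using assms unfolding wf_game_def by blast+
  have "\<forall>h h'. internal H h \<and> internal H h' \<and> ifs h = ifs h' \<longrightarrow>
      swap_teams (pl h) = swap_teams (pl h') \<and> acts H h = acts H h'"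
    using isets by metis
  moreover have "\<forall>i h h'. i \<noteq> Chance \<and> internal H h \<and> internal H h' \<and> swap_teams (pl h) = i \<and> ifs h = ifs h'
      \<longrightarrow> seqs pl ifs (swap_teams i) h = seqs pl ifs (swap_teams i) h'"
    using recall swap_teams_eq_iff swap_teams_eq_Chance_iff by metis
  ultimately show ?thesis
    using tree unfolding wf_game_def seqs_swap_teams comp_apply by blast
qed

lemma Seqs_swap_teams: "Seqs H (swap_teams \<circ> pl) ifs i = Seqs H pl ifs (swap_teams i)"
  unfolding Seqs_def Isets_swap_teams ..

lemma parseq_swap_teams: "parseq H (swap_teams \<circ> pl) ifs i I = parseq H pl ifs (swap_teams i) I"
  unfolding parseq_def seqs_swap_teams ..

lemma Plans_swap_teams: "Plans H (swap_teams \<circ> pl) ifs i = Plans H pl ifs (swap_teams i)"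
  unfolding Plans_def reach_def seqs_swap_teams Isets_swap_teams ..

lemma PlansOf_swap_teams: "PlansOf H (swap_teams \<circ> pl) ifs i s = PlansOf H pl ifs (swap_teams i) s"
  unfolding PlansOf_def reach_def seqs_swap_teams Plans_swap_teams ..

lemma relevant_swap_teams: "relevant H (swap_teams \<circ> pl) ifs s2 s1 \<longleftrightarrow> relevant H pl ifs s1 s2"
  unfolding relevant_def Seqs_swap_teams by (auto simp: connected_sym split: option.splits)

lemma XiStar2_swap_teams:
  "\<xi> \<in> XiStar2 H pl ifs \<Longrightarrow> (\<lambda>s2 s1. \<xi> s1 s2) \<in> XiStar1 H (swap_teams \<circ> pl) ifs"
  unfolding XiStar1_def XiStar2_def VSF_def Isets_swap_teams Seqs_swap_teams parseq_swap_teams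
    relevant_swap_teams
  by simp

lemma fmap_swap_teams:
  "fmap H (swap_teams \<circ> pl) ifs (pair_pmf \<mu> (return_pmf \<pi>)) s2 s1 =
   fmap H pl ifs (pair_pmf (return_pmf \<pi>) \<mu>) s1 s2"
  unfolding fmap_def PlansOf_swap_teams pmf_pair
  by (simp add: sum.swap[of _ "PlansOf H pl ifs T2 s2"] mult.commute)

theorem mainTheorem6:
  fixes H :: "'a list set" and pl :: "'a list \<Rightarrow> plr" and ifs :: "'a list \<Rightarrow> 'i"
  assumes "wf_game H pl ifs"
  shows "(\<forall>\<xi> \<in> XiStar1 H pl ifs. \<exists>\<mu>1 \<pi>2.
            set_pmf \<mu>1 \<subseteq> Plans H pl ifs T1 \<and> \<pi>2 \<in> Plans H pl ifs T2 \<and>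
            (\<forall>s1 s2. relevant H pl ifs s1 s2 \<longrightarrow>
               \<xi> s1 s2 = fmap H pl ifs (pair_pmf \<mu>1 (return_pmf \<pi>2)) s1 s2) \<and>
            (\<forall>s2 \<in> Seqs H pl ifs T2.
               \<xi> None s2 = (if \<pi>2 \<in> PlansOf H pl ifs T2 s2 then 1 else 0))) \<and>
         (\<forall>\<xi> \<in> XiStar2 H pl ifs. \<exists>\<pi>1 \<mu>2.
            \<pi>1 \<in> Plans H pl ifs T1 \<and> set_pmf \<mu>2 \<subseteq> Plans H pl ifs T2 \<and>
            (\<forall>s1 s2. relevant H pl ifs s1 s2 \<longrightarrow>
               \<xi> s1 s2 = fmap H pl ifs (pair_pmf (return_pmf \<pi>1) \<mu>2) s1 s2))"
proof (intro conjI ballI)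
  fix \<xi> assume "\<xi> \<in> XiStar1 H pl ifs"
  then show "\<exists>\<mu>1 \<pi>2. set_pmf \<mu>1 \<subseteq> Plans H pl ifs T1 \<and> \<pi>2 \<in> Plans H pl ifs T2 \<and>
      (\<forall>s1 s2. relevant H pl ifs s1 s2 \<longrightarrow> \<xi> s1 s2 = fmap H pl ifs (pair_pmf \<mu>1 (return_pmf \<pi>2)) s1 s2) \<and>
      (\<forall>s2 \<in> Seqs H pl ifs T2. \<xi> None s2 = (if \<pi>2 \<in> PlansOf H pl ifs T2 s2 then 1 else 0))"
    by (rule game.XiStar1_decomposition[OF game.intro[OF assms]])
next
  fix \<xi> assume "\<xi> \<in> XiStar2 H pl ifs"
  then have "(\<lambda>s2 s1. \<xi> s1 s2) \<in> XiStar1 H (swap_teams \<circ> pl) ifs"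
    by (rule XiStar2_swap_teams)
  then obtain \<mu>2 \<pi>1 where "set_pmf \<mu>2 \<subseteq> Plans H pl ifs T2" "\<pi>1 \<in> Plans H pl ifs T1"
    "\<forall>s2 s1. relevant H (swap_teams \<circ> pl) ifs s2 s1 \<longrightarrow>
       \<xi> s1 s2 = fmap H (swap_teams \<circ> pl) ifs (pair_pmf \<mu>2 (return_pmf \<pi>1)) s2 s1"
    using game.XiStar1_decomposition[OF game.intro[OF wf_game_swap_teams[OF assms]]]
    unfolding Plans_swap_teams swap_teams.simps by blast
  then show "\<exists>\<pi>1 \<mu>2. \<pi>1 \<in> Plans H pl ifs T1 \<and> set_pmf \<mu>2 \<subseteq> Plans H pl ifs T2 \<and>
      (\<forall>s1 s2. relevant H pl ifs s1 s2 \<longrightarrow> \<xi> s1 s2 = fmap H pl ifs (pair_pmf (return_pmf \<pi>1) \<mu>2) s1 s2)"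
    unfolding relevant_swap_teams fmap_swap_teams by blast
qed

end
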